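(* Under the standing setup (in either Scenario I or Scenario II), assume $0<h<\frac{1}{d_{\max}}$ and that the expected graph is strongly connected. Then the system $x(t_{k+1})=(I-hL_{\sigma_k})^{\bar k}x(t_k)$ reaches consensus almost surely: for every $x(0)\in\mathbb{R}^n$, $P\{\lim_{k\to\infty}(M(t_k)-m(t_k))=0\}=1$, where $M(t_k)=\max_i x_i(t_k)$ and $m(t_k)=\min_i x_i(t_k)$. The same conclusion holds for the limiting system $x(t_{k+1})=e^{-L_{\sigma_k}\Delta}x(t_k)$.
   Context: Standing setup. $n\ge3$ agents. $G$ is an undirected connected graph on $\{1,\dots,n\}$ with symmetric $0/1$ adjacency matrix $A=[a_{ij}]$ (zero diagonal), degrees $d_i=\sum_j a_{ij}$, $d_{\max}=\max_i d_i$, and Laplacian $L=\mathrm{diag}(d_1,\dots,d_n)-A$, with entries $l_{ij}$. For a (possibly directed) $0/1$ adjacency matrix $B$ ($b_{ij}=1$ meaning agent $i$ receives from agent $j$), its Laplacian is $\mathrm{diag}(B\mathbf{1})-B$. Scenario I (agents 1,2 may fail to receive): $A_1$ is $A$ with row 1 set to zero, $A_2$ is $A$ with row 2 set to zero, $A_3$ is $A$ with rows 1 and 2 set to zero, $A_4=A$. Scenario II (agents 1,2 may fail to send): same with columns instead of rows. $L_i$ is the Laplacian of $A_i$ (so $L_4=L$). Probabilities $p_1=\alpha,p_2=\beta,p_3=\gamma,p_4=\theta\in(0,1)$ with $\alpha+\beta+\gamma+\theta=1$. The expected graph is the directed graph with weighted adjacency matrix $\sum_{i=1}^4 p_iA_i$.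 Sampling period $h>0$, integer $\bar k\ge1$, $\Delta=\bar k h$, $t_k=k\Delta$. $\sigma_0,\sigma_1,\dots$ are i.i.d. random variables in $\{1,2,3,4\}$ with $P(\sigma_k=i)=p_i$ (the graph is held fixed on each interval of length $\Delta$, during which the delta-operator system $\delta x=-L_{\sigma_k}x$ with step $h$ is run $\bar k$ times). The initial state $x(t_0)=x(0)\in\mathbb{R}^n$ is deterministic. $\mathbf{1}$ is the all-ones column vector. *)

theory Defs
  imports "HOL-Probability.Probability"
begin

text \<open>Agents are the natural numbers 1..n; n x n real matrices are functions
  nat => nat => real of which only the entries indexed by {1..n} x {1..n} matter.\<close>

definition mmult :: "nat \<Rightarrow> (nat \<Rightarrow> nat \<Rightarrow> real) \<Rightarrow> (nat \<Rightarrow> nat \<Rightarrow> real) \<Rightarrow> nat \<Rightarrow> nat \<Rightarrow> real" where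
  "mmult n P Q = (\<lambda>i j. \<Sum>l=1..n. P i l * Q l j)"

definition idm :: "nat \<Rightarrow> nat \<Rightarrow> real" where
  "idm = (\<lambda>i j. if i = j then 1 else 0)"

fun mpow :: "nat \<Rightarrow> (nat \<Rightarrow> nat \<Rightarrow> real) \<Rightarrow> nat \<Rightarrow> nat \<Rightarrow> nat \<Rightarrow> real" where
  "mpow n P 0 = idm"
| "mpow n P (Suc k) = mmult n P (mpow n P k)"

definition mvec :: "nat \<Rightarrow> (nat \<Rightarrow> nat \<Rightarrow> real) \<Rightarrow> (nat \<Rightarrow> real) \<Rightarrow> nat \<Rightarrow> real" where
  "mvec n P x = (\<lambda>i. \<Sum>j=1..n. P i j * x j)"

definition mexp :: "nat \<Rightarrow> (nat \<Rightarrow> nat \<Rightarrow> real) \<Rightarrow> nat \<Rightarrow> nat \<Rightarrow> real" where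
  "mexp n P = (\<lambda>i j. \<Sum>k. mpow n P k i j / fact k)"

definition laplacian :: "nat \<Rightarrow> (nat \<Rightarrow> nat \<Rightarrow> real) \<Rightarrow> nat \<Rightarrow> nat \<Rightarrow> real" where
  "laplacian n B = (\<lambda>i j. (if i = j then (\<Sum>l=1..n. B i l) else 0) - B i j)"

definition sym01_adj :: "nat \<Rightarrow> (nat \<Rightarrow> nat \<Rightarrow> real) \<Rightarrow> bool" where
  "sym01_adj n A \<longleftrightarrow> (\<forall>i\<in>{1..n}. \<forall>j\<in>{1..n}. A i j \<in> {0, 1} \<and> A i j = A j i) \<and> (\<forall>i\<in>{1..n}. A i i = 0)"

definition connected_graph :: "nat \<Rightarrow> (nat \<Rightarrow> nat \<Rightarrow> real) \<Rightarrow> bool" where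
  "connected_graph n A \<longleftrightarrow>
     (\<forall>i\<in>{1..n}. \<forall>j\<in>{1..n}. (\<lambda>u v. u \<in> {1..n} \<and> v \<in> {1..n} \<and> A u v = 1)\<^sup>*\<^sup>* i j)"

text \<open>Weighted digraph with adjacency W (W v u > 0: v receives from u, i.e. edge u -> v)
  is strongly connected: every agent reaches every agent along directed edges.\<close>
definition strongly_connected :: "nat \<Rightarrow> (nat \<Rightarrow> nat \<Rightarrow> real) \<Rightarrow> bool" where
  "strongly_connected n W \<longleftrightarrow>
     (\<forall>i\<in>{1..n}. \<forall>j\<in>{1..n}. (\<lambda>u v. u \<in> {1..n} \<and> v \<in> {1..n} \<and> W v u > 0)\<^sup>*\<^sup>* i j)"

definition dmax :: "nat \<Rightarrow> (nat \<Rightarrow> nat \<Rightarrow> real) \<Rightarrow> real" where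
  "dmax n A = Max ((\<lambda>i. \<Sum>j=1..n. A i j) ` {1..n})"

datatype scenario = ReceiveFail | SendFail

definition failed :: "nat \<Rightarrow> nat set" where
  "failed q = (if q = 1 then {1} else if q = 2 then {2} else if q = 3 then {1, 2} else {})"

text \<open>Scenario I: rows of failed agents zeroed; Scenario II: columns zeroed.\<close>
definition fail_adj :: "scenario \<Rightarrow> (nat \<Rightarrow> nat \<Rightarrow> real) \<Rightarrow> nat \<Rightarrow> nat \<Rightarrow> nat \<Rightarrow> real" where
  "fail_adj s A q = (\<lambda>i j. if (case s of ReceiveFail \<Rightarrow> i \<in> failed q | SendFail \<Rightarrow> j \<in> failed q)
                           then 0 else A i j)"

definition probs :: "real \<Rightarrow> real \<Rightarrow> real \<Rightarrow> real \<Rightarrow> nat \<Rightarrow> real" where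
  "probs \<alpha> \<beta> \<gamma> \<theta> q = (if q = 1 then \<alpha> else if q = 2 then \<beta> else if q = 3 then \<gamma> else if q = 4 then \<theta> else 0)"

definition expected_graph :: "scenario \<Rightarrow> (nat \<Rightarrow> nat \<Rightarrow> real) \<Rightarrow> (nat \<Rightarrow> real) \<Rightarrow> nat \<Rightarrow> nat \<Rightarrow> real" where
  "expected_graph s A p = (\<lambda>i j. \<Sum>q=1..4. p q * fail_adj s A q i j)"

fun traj :: "nat \<Rightarrow> (nat \<Rightarrow> nat \<Rightarrow> nat \<Rightarrow> real) \<Rightarrow> (nat \<Rightarrow> nat) \<Rightarrow> (nat \<Rightarrow> real) \<Rightarrow> nat \<Rightarrow> nat \<Rightarrow> real" where
  "traj n \<Phi> sg x0 0 = x0"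
| "traj n \<Phi> sg x0 (Suc k) = mvec n (\<Phi> (sg k)) (traj n \<Phi> sg x0 k)"

definition spread :: "nat \<Rightarrow> (nat \<Rightarrow> real) \<Rightarrow> real" where
  "spread n x = Max (x ` {1..n}) - Min (x ` {1..n})"

definition euler_trans :: "nat \<Rightarrow> real \<Rightarrow> nat \<Rightarrow> (nat \<Rightarrow> nat \<Rightarrow> real) \<Rightarrow> nat \<Rightarrow> nat \<Rightarrow> real" where
  "euler_trans n h kbar L = mpow n (\<lambda>i j. idm i j - h * L i j) kbar"

definition exp_trans :: "nat \<Rightarrow> real \<Rightarrow> (nat \<Rightarrow> nat \<Rightarrow> real) \<Rightarrow> nat \<Rightarrow> nat \<Rightarrow> real" where
  "exp_trans n \<Delta> L = mexp n (\<lambda>i j. - (\<Delta> * L i j))"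

end

theory Submission
  imports Defs
begin

text \<open>Every transition matrix \<open>(I - h L\<^sub>q)\<^bsup>kbar\<^esup>\<close> and \<open>exp (-\<Delta> L\<^sub>q)\<close> is row-stochastic, so
  the spread \<open>max x - min x\<close> never increases.  The failure-free mode 4 occurs with
  probability \<open>\<theta> > 0\<close>; its transition matrix has a positive diagonal and is positive on the
  edges of the connected graph \<open>G\<close>, so some power \<open>\<Phi>\<^sub>4\<^sup>b\<close> has all entries at least some
  \<open>\<epsilon> > 0\<close>, and applying it shrinks the spread by the factor \<open>1 - 2\<epsilon>\<close>.  By independence,
  a run of \<open>b\<close> consecutive mode-4 intervals is missed in each of \<open>J\<close>
  disjoint blocks with probability \<open>(1 - \<theta>\<^sup>b)\<^sup>J \<longrightarrow> 0\<close>, so such runs occur infinitely often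
  almost surely and the spread tends to 0.  For the matrix exponential, positivity comes
  from \<open>exp (-\<Delta> L) = exp (-c) * exp (c I - \<Delta> L)\<close> with \<open>c I - \<Delta> L\<close> entrywise nonnegative.\<close>

lemma mvec_mmult: "mvec n (mmult n P Q) x = mvec n P (mvec n Q x)"
proof
  fix i
  show "mvec n (mmult n P Q) x i = mvec n P (mvec n Q x) i"
    unfolding mvec_def mmult_def
    by (simp add: sum_distrib_left sum_distrib_right mult.assoc) (rule sum.swap)
qed

lemma sum_idm_mult_left:
  assumes "i \<in> {1..n}" shows "(\<Sum>j=1..n. idm i j * f j) = f i"
proof -
  have "(\<Sum>j=1..n. idm i j * f j) = (\<Sum>j=1..n. if i = j then f j else 0)"
    by (rule sum.cong) (auto simp: idm_def)
  then show ?thesis using assms by simp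
qed

lemma sum_idm_mult_right:
  assumes "i \<in> {1..n}" shows "(\<Sum>j=1..n. f j * idm j i) = f i"
proof -
  have "(\<Sum>j=1..n. f j * idm j i) = (\<Sum>j=1..n. if i = j then f j else 0)"
    by (rule sum.cong) (auto simp: idm_def)
  then show ?thesis using assms by simp
qed

lemma mvec_idm: "i \<in> {1..n} \<Longrightarrow> mvec n idm x i = x i"
  unfolding mvec_def by (rule sum_idm_mult_left)

lemma mvec_cong: "(\<And>i. i \<in> {1..n} \<Longrightarrow> x i = y i) \<Longrightarrow> mvec n P x = mvec n P y"
  unfolding mvec_def by (auto intro!: ext sum.cong)

lemma mpow_1: "j \<in> {1..n} \<Longrightarrow> mpow n P 1 i j = P i j"
  using sum_idm_mult_right[of j n "P i"] by (simp add: mmult_def)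

lemma bounded_entries:
  fixes P :: "nat \<Rightarrow> nat \<Rightarrow> real"
  obtains a :: real where "0 \<le> a" "\<And>i j. i \<in> {1..n} \<Longrightarrow> j \<in> {1..n} \<Longrightarrow> \<bar>P i j\<bar> \<le> a"
proof
  show "0 \<le> (\<Sum>i=1..n. \<Sum>j=1..n. \<bar>P i j\<bar>)" by (intro sum_nonneg) simp
  fix i j assume "i \<in> {1..n}" "j \<in> {1..n}"
  then have "\<bar>P i j\<bar> \<le> (\<Sum>j'=1..n. \<bar>P i j'\<bar>)" by (intro member_le_sum[of j]) auto
  also have "\<dots> \<le> (\<Sum>i'=1..n. \<Sum>j'=1..n. \<bar>P i' j'\<bar>)"
    using \<open>i \<in> {1..n}\<close> by (intro member_le_sum[of i]) (auto intro: sum_nonneg)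
  finally show "\<bar>P i j\<bar> \<le> (\<Sum>i=1..n. \<Sum>j=1..n. \<bar>P i j\<bar>)" .
qed


section \<open>Stochastic and primitive matrices\<close>

definition stochastic :: "nat \<Rightarrow> (nat \<Rightarrow> nat \<Rightarrow> real) \<Rightarrow> bool" where
  "stochastic n P \<longleftrightarrow>
     (\<forall>i\<in>{1..n}. \<forall>j\<in>{1..n}. 0 \<le> P i j) \<and> (\<forall>i\<in>{1..n}. (\<Sum>j=1..n. P i j) = 1)"

definition primitive :: "nat \<Rightarrow> (nat \<Rightarrow> nat \<Rightarrow> real) \<Rightarrow> bool" where
  "primitive n P \<longleftrightarrow> (\<exists>b. \<forall>i\<in>{1..n}. \<forall>j\<in>{1..n}. 0 < mpow n P b i j)"

lemma mpow_nonneg: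
  assumes "\<And>i j. i \<in> {1..n} \<Longrightarrow> j \<in> {1..n} \<Longrightarrow> 0 \<le> P i j" and "i \<in> {1..n}"
  shows "0 \<le> mpow n P k i j"
  using assms(2)
proof (induction k arbitrary: i)
  case 0 then show ?case by (simp add: idm_def)
next
  case (Suc k) then show ?case using assms(1) by (auto simp: mmult_def intro!: sum_nonneg)
qed

lemma mpow_rowsum_const:
  assumes "\<And>i. i \<in> {1..n} \<Longrightarrow> (\<Sum>j=1..n. P i j) = r" and "i \<in> {1..n}"
  shows "(\<Sum>j=1..n. mpow n P k i j) = r ^ k"
  using assms(2)
proof (induction k arbitrary: i)
  case 0 then show ?case by (simp add: idm_def)
next
  case (Suc k)
  have "(\<Sum>j=1..n. mpow n P (Suc k) i j) = (\<Sum>l=1..n. P i l * (\<Sum>j=1..n. mpow n P k l j))"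
    by (simp add: mmult_def sum_distrib_left) (rule sum.swap)
  also have "\<dots> = (\<Sum>l=1..n. P i l) * r ^ k" using Suc.IH by (simp add: sum_distrib_right)
  finally show ?case using assms(1)[OF Suc.prems] by simp
qed

lemma stochastic_mpow:
  assumes "stochastic n P" shows "stochastic n (mpow n P k)"
proof -
  have "(\<Sum>j=1..n. mpow n P k i j) = 1" if "i \<in> {1..n}" for i
    using mpow_rowsum_const[of n P 1, OF _ that] assms by (simp add: stochastic_def)
  moreover have "0 \<le> mpow n P k i j" if "i \<in> {1..n}" for i j
    using mpow_nonneg[OF _ that] assms by (auto simp: stochastic_def)
  ultimately show ?thesis by (simp add: stochastic_def)
qed

lemma mpow_Suc_ge:
  assumes "\<And>i j. i \<in> {1..n} \<Longrightarrow> j \<in> {1..n} \<Longrightarrow> 0 \<le> P i j" and "i \<in> {1..n}" "l \<in> {1..n}"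
  shows "P i l * mpow n P k l j \<le> mpow n P (Suc k) i j"
  unfolding mpow.simps mmult_def
  using assms mpow_nonneg[OF assms(1)] by (intro member_le_sum mult_nonneg_nonneg) auto

context
  fixes n :: nat and P :: "nat \<Rightarrow> nat \<Rightarrow> real"
  assumes nonneg: "\<And>i j. i \<in> {1..n} \<Longrightarrow> j \<in> {1..n} \<Longrightarrow> 0 \<le> P i j"
    and diag_pos: "\<And>i. i \<in> {1..n} \<Longrightarrow> 0 < P i i"
begin

lemma mpow_pos_mono:
  assumes "i \<in> {1..n}" "0 < mpow n P k i j" "k \<le> k'"
  shows "0 < mpow n P k' i j"
  using assms(3)
proof (induction k' rule: dec_induct)
  case (step m)
  have "0 < P i i * mpow n P m i j" using step diag_pos assms(1) by simp
  also have "\<dots> \<le> mpow n P (Suc m) i j" by (rule mpow_Suc_ge[OF nonneg assms(1,1)])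
  finally show ?case .
qed (use assms in simp)

lemma mpow_diag_pos: "i \<in> {1..n} \<Longrightarrow> 0 < mpow n P k i i"
  by (rule mpow_pos_mono[of _ 0]) (auto simp: idm_def)

lemma mpow_pos:
  assumes "i \<in> {1..n}" "j \<in> {1..n}" "0 < P i j" "0 < k"
  shows "0 < mpow n P k i j"
proof (rule mpow_pos_mono[of _ 1])
  show "0 < mpow n P 1 i j" using assms mpow_1[of j n P i] by simp
qed (use assms in auto)

lemma mpow_pos_if_path:
  assumes path: "(\<lambda>u v. u \<in> {1..n} \<and> v \<in> {1..n} \<and> A u v = 1)\<^sup>*\<^sup>* i j"
    and edge_pos: "\<And>i j. i \<in> {1..n} \<Longrightarrow> j \<in> {1..n} \<Longrightarrow> A i j = 1 \<Longrightarrow> 0 < P i j"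
  shows "\<exists>k. 0 < mpow n P k i j"
  using path
proof (induction rule: converse_rtranclp_induct)
  case base
  show ?case by (rule exI[of _ 0]) (simp add: idm_def)
next
  case (step i' l)
  then obtain k where k: "0 < mpow n P k l j" by blast
  have "0 < P i' l * mpow n P k l j" using step edge_pos k by simp
  also have "\<dots> \<le> mpow n P (Suc k) i' j" by (rule mpow_Suc_ge[OF nonneg]) (use step in auto)
  finally show ?case by (rule exI)
qed

text \<open>A path of length \<open>k\<close> from \<open>i\<close> to \<open>j\<close> makes \<open>P\<^sup>k\<close> positive at \<open>(i, j)\<close>; the positive
  diagonal keeps it positive in all higher powers, so one exponent serves all pairs.\<close>

lemma primitive_if_connected:
  assumes conn: "connected_graph n A"
    and edge_pos: "\<And>i j. i \<in> {1..n} \<Longrightarrow> j \<in> {1..n} \<Longrightarrow> A i j = 1 \<Longrightarrow> 0 < P i j"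
  shows "primitive n P"
proof -
  have "\<forall>p\<in>{1..n} \<times> {1..n}. \<exists>k. 0 < mpow n P k (fst p) (snd p)"
  proof
    fix p assume "p \<in> {1..n} \<times> {1..n}"
    then obtain i j where p: "p = (i, j)" "i \<in> {1..n}" "j \<in> {1..n}" by blast
    have "(\<lambda>u v. u \<in> {1..n} \<and> v \<in> {1..n} \<and> A u v = 1)\<^sup>*\<^sup>* i j"
      using bspec[OF bspec[OF conn[unfolded connected_graph_def] p(2)] p(3)] .
    then show "\<exists>k. 0 < mpow n P k (fst p) (snd p)"
      unfolding p(1) fst_conv snd_conv by (rule mpow_pos_if_path[OF _ edge_pos])
  qed
  from bchoice[OF this] obtain k
    where k: "\<forall>p\<in>{1..n} \<times> {1..n}. 0 < mpow n P (k p) (fst p) (snd p)" by blast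
  have "0 < mpow n P (Max (k ` ({1..n} \<times> {1..n}))) i j" if ij: "i \<in> {1..n}" "j \<in> {1..n}" for i j
  proof (rule mpow_pos_mono)
    show "0 < mpow n P (k (i, j)) i j" using bspec[OF k, of "(i, j)"] ij by simp
    show "k (i, j) \<le> Max (k ` ({1..n} \<times> {1..n}))" using ij by (intro Max_ge) auto
  qed (rule ij(1))
  then show ?thesis unfolding primitive_def by blast
qed

end

lemma primitive_if_connected_support:
  assumes "stochastic n P" and "connected_graph n A"
    and "\<And>i j. i \<in> {1..n} \<Longrightarrow> j \<in> {1..n} \<Longrightarrow> i = j \<or> A i j = 1 \<Longrightarrow> 0 < P i j"
  shows "primitive n P"
  using assms by (intro primitive_if_connected[of n P A]) (auto simp: stochastic_def)


section \<open>Contraction of the spread\<close>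

lemma spread_nonneg:
  assumes "1 \<le> n" shows "0 \<le> spread n x"
proof -
  have "Min (x ` {1..n}) \<le> x 1" "x 1 \<le> Max (x ` {1..n})" using assms by auto
  then show ?thesis unfolding spread_def by linarith
qed

lemma spread_cong: "(\<And>i. i \<in> {1..n} \<Longrightarrow> x i = y i) \<Longrightarrow> spread n x = spread n y"
  unfolding spread_def by (metis image_cong)

lemma stochastic_mvec_diff:
  assumes "stochastic n P" "i \<in> {1..n}"
  shows "mvec n P x i - c = (\<Sum>j=1..n. P i j * (x j - c))"
    and "c - mvec n P x i = (\<Sum>j=1..n. P i j * (c - x j))"
proof -
  have "(\<Sum>j=1..n. P i j) = 1" using assms by (simp add: stochastic_def)
  then have "(\<Sum>j=1..n. P i j * c) = c" by (simp flip: sum_distrib_right)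
  then show "mvec n P x i - c = (\<Sum>j=1..n. P i j * (x j - c))"
    and "c - mvec n P x i = (\<Sum>j=1..n. P i j * (c - x j))"
    by (simp_all add: mvec_def right_diff_distrib sum_subtractf)
qed

text \<open>Each new value is a convex combination giving weight at least \<open>\<epsilon>\<close> to both the largest
  and the smallest old value, so it stays \<open>\<epsilon>\<close> times the old spread away from either end.\<close>

lemma spread_mvec_le:
  assumes n: "1 \<le> n" and P: "stochastic n P"
    and ge: "\<And>i j. i \<in> {1..n} \<Longrightarrow> j \<in> {1..n} \<Longrightarrow> \<epsilon> \<le> P i j"
  shows "spread n (mvec n P x) \<le> (1 - 2 * \<epsilon>) * spread n x"
proof -
  let ?R = "{1..n::nat}"
  define hi where "hi = Max (x ` ?R)"
  define lo where "lo = Min (x ` ?R)"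
  have fin: "finite (x ` ?R)" "x ` ?R \<noteq> {}" using n by auto
  obtain jhi where jhi: "jhi \<in> ?R" "x jhi = hi" using Max_in[OF fin] unfolding hi_def by auto
  obtain jlo where jlo: "jlo \<in> ?R" "x jlo = lo" using Min_in[OF fin] unfolding lo_def by auto
  have x_bounds: "lo \<le> x j" "x j \<le> hi" if "j \<in> ?R" for j
    using that fin unfolding hi_def lo_def by auto
  have P_nonneg: "0 \<le> P i j" if "i \<in> ?R" "j \<in> ?R" for i j
    using P that by (simp add: stochastic_def)
  have bounds: "lo + \<epsilon> * (hi - lo) \<le> mvec n P x i" "mvec n P x i \<le> hi - \<epsilon> * (hi - lo)"
    if i: "i \<in> ?R" for i
  proof -
    have "\<epsilon> * (hi - lo) \<le> P i jhi * (x jhi - lo)"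
      using ge[OF i jhi(1)] x_bounds[OF jlo(1)] jhi jlo by (simp add: mult_right_mono)
    also have "\<dots> \<le> (\<Sum>j=1..n. P i j * (x j - lo))"
      using jhi(1) P_nonneg[OF i] x_bounds by (intro member_le_sum mult_nonneg_nonneg) auto
    finally show "lo + \<epsilon> * (hi - lo) \<le> mvec n P x i"
      using stochastic_mvec_diff(1)[OF P i, of x lo] by linarith
    have "\<epsilon> * (hi - lo) \<le> P i jlo * (hi - x jlo)"
      using ge[OF i jlo(1)] x_bounds[OF jhi(1)] jhi jlo by (simp add: mult_right_mono)
    also have "\<dots> \<le> (\<Sum>j=1..n. P i j * (hi - x j))"
      using jlo(1) P_nonneg[OF i] x_bounds by (intro member_le_sum mult_nonneg_nonneg) auto
    finally show "mvec n P x i \<le> hi - \<epsilon> * (hi - lo)"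
      using stochastic_mvec_diff(2)[OF P i, of hi x] by linarith
  qed
  have "Max (mvec n P x ` ?R) \<le> hi - \<epsilon> * (hi - lo)" "lo + \<epsilon> * (hi - lo) \<le> Min (mvec n P x ` ?R)"
    using bounds n by (auto simp: Max_le_iff Min_ge_iff)
  moreover have "(1 - 2 * \<epsilon>) * (hi - lo) = (hi - \<epsilon> * (hi - lo)) - (lo + \<epsilon> * (hi - lo))"
    by (simp add: algebra_simps)
  ultimately show ?thesis unfolding spread_def hi_def[symmetric] lo_def[symmetric] by linarith
qed

lemma spread_mvec_le_spread: "1 \<le> n \<Longrightarrow> stochastic n P \<Longrightarrow> spread n (mvec n P x) \<le> spread n x"
  using spread_mvec_le[of n P 0 x] by (simp add: stochastic_def)

lemma primitive_uniform_lower_bound: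
  assumes "1 \<le> n" "primitive n P"
  obtains \<epsilon> b where "0 < \<epsilon>" "\<And>i j. i \<in> {1..n} \<Longrightarrow> j \<in> {1..n} \<Longrightarrow> \<epsilon> \<le> mpow n P b i j"
proof -
  obtain b where b: "\<And>i j. i \<in> {1..n} \<Longrightarrow> j \<in> {1..n} \<Longrightarrow> 0 < mpow n P b i j"
    using assms(2) unfolding primitive_def by blast
  let ?E = "(\<lambda>p. mpow n P b (fst p) (snd p)) ` ({1..n} \<times> {1..n})"
  have "Min ?E \<in> ?E" using assms(1) by (intro Min_in) auto
  then have "0 < Min ?E" using b by auto
  moreover have "Min ?E \<le> mpow n P b i j" if "i \<in> {1..n}" "j \<in> {1..n}" for i j
    using that by (intro Min_le) (auto intro!: image_eqI[where x = "(i, j)"])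
  ultimately show ?thesis using that by blast
qed


lemma traj_add:
  assumes "\<And>l. l < b \<Longrightarrow> sg (k + l) = q" and "i \<in> {1..n}"
  shows "traj n \<Phi> sg x0 (k + b) i = mvec n (mpow n (\<Phi> q) b) (traj n \<Phi> sg x0 k) i"
  using assms
proof (induction b arbitrary: i)
  case 0 then show ?case by (simp add: mvec_idm)
next
  case (Suc b)
  have "traj n \<Phi> sg x0 (k + Suc b) = mvec n (\<Phi> q) (traj n \<Phi> sg x0 (k + b))"
    using Suc.prems(1)[of b] by simp
  also have "\<dots> = mvec n (\<Phi> q) (mvec n (mpow n (\<Phi> q) b) (traj n \<Phi> sg x0 k))"
    by (rule mvec_cong) (use Suc in auto)
  finally show ?case by (simp add: mvec_mmult)
qed

lemma decseq_tendsto_zero_if_frequently_contracting: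
  fixes s :: "nat \<Rightarrow> real"
  assumes nonneg: "\<And>k. 0 \<le> s k" and dec: "decseq s" and c: "0 \<le> c" "c < 1"
    and contr: "\<exists>\<^sub>F k in sequentially. s (k + b) \<le> c * s k"
  shows "s \<longlonglongrightarrow> 0"
proof -
  obtain L where L: "s \<longlonglongrightarrow> L" "\<And>k. L \<le> s k"
    using decseq_convergent[OF dec] nonneg by metis
  have "\<exists>k. s k \<le> c ^ m * s 0" for m
  proof (induction m)
    case (Suc m)
    then obtain k where k: "s k \<le> c ^ m * s 0" by blast
    obtain k' where k': "k \<le> k'" "s (k' + b) \<le> c * s k'"
      using contr unfolding frequently_sequentially by blast
    have "s (k' + b) \<le> c * (c ^ m * s 0)"
      using k'(2) mult_left_mono[OF order_trans[OF decseqD[OF dec k'(1)] k] c(1)] by linarith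
    then show ?case by (auto simp: mult.assoc)
  qed auto
  then have "L \<le> c ^ m * s 0" for m
  proof -
    obtain k where "s k \<le> c ^ m * s 0" using \<open>\<exists>k. s k \<le> c ^ m * s 0\<close> ..
    then show ?thesis using L(2)[of k] by linarith
  qed
  moreover have "(\<lambda>m. c ^ m * s 0) \<longlonglongrightarrow> 0"
    using c by (intro tendsto_mult_left_zero LIMSEQ_power_zero) simp
  ultimately have "L \<le> 0" by (intro LIMSEQ_le_const) auto
  moreover have "0 \<le> L" using nonneg by (intro LIMSEQ_le_const[OF L(1)]) auto
  ultimately show ?thesis using L(1) by simp
qed

lemma spread_traj_tendsto_zero:
  assumes n: "1 \<le> n" and stoch: "\<And>q. stochastic n (\<Phi> q)" and prim: "primitive n (\<Phi> q)"
    and runs: "\<And>b. \<exists>\<^sub>F k in sequentially. \<forall>l<b. sg (k + l) = q"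
  shows "(\<lambda>k. spread n (traj n \<Phi> sg x0 k)) \<longlonglongrightarrow> 0"
proof -
  obtain \<epsilon> b where \<epsilon>: "0 < \<epsilon>" "\<And>i j. i \<in> {1..n} \<Longrightarrow> j \<in> {1..n} \<Longrightarrow> \<epsilon> \<le> mpow n (\<Phi> q) b i j"
    using primitive_uniform_lower_bound[OF n prim] by metis
  define \<epsilon>' where "\<epsilon>' = min \<epsilon> (1/2)"
  let ?s = "\<lambda>k. spread n (traj n \<Phi> sg x0 k)"
  have contr: "?s (k + b) \<le> (1 - 2 * \<epsilon>') * ?s k" if "\<forall>l<b. sg (k + l) = q" for k
  proof -
    have "?s (k + b) = spread n (mvec n (mpow n (\<Phi> q) b) (traj n \<Phi> sg x0 k))"
      by (rule spread_cong, rule traj_add) (use that in auto)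
    also have "\<dots> \<le> (1 - 2 * \<epsilon>') * ?s k"
    proof (rule spread_mvec_le[OF n stochastic_mpow[OF stoch]])
      show "\<epsilon>' \<le> mpow n (\<Phi> q) b i j" if "i \<in> {1..n}" "j \<in> {1..n}" for i j
        using \<epsilon>(2)[OF that] unfolding \<epsilon>'_def by linarith
    qed
    finally show ?thesis .
  qed
  show ?thesis
  proof (rule decseq_tendsto_zero_if_frequently_contracting)
    show "decseq ?s"
    proof (rule decseq_SucI)
      show "?s (Suc k) \<le> ?s k" for k
        unfolding traj.simps by (rule spread_mvec_le_spread[OF n stoch])
    qed
    show "\<exists>\<^sub>F k in sequentially. ?s (k + b) \<le> (1 - 2 * \<epsilon>') * ?s k"
      using runs[of b] by (rule frequently_elim1) (rule contr)
    show "0 \<le> 1 - 2 * \<epsilon>'" "1 - 2 * \<epsilon>' < 1"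
      using \<epsilon>(1) unfolding \<epsilon>'_def by auto
  qed (rule spread_nonneg[OF n])
qed


section \<open>Runs of a mode in an i.i.d.\ sequence\<close>

context prob_space
begin

lemma prob_all_eq_pow_card:
  fixes \<sigma> :: "nat \<Rightarrow> 'a \<Rightarrow> 'b"
  assumes ind: "indep_vars (\<lambda>_. count_space UNIV) \<sigma> UNIV"
    and p: "\<And>k. prob {\<omega> \<in> space M. \<sigma> k \<omega> = q} = p" and K: "finite K"
  shows "prob {\<omega> \<in> space M. \<forall>k\<in>K. \<sigma> k \<omega> = q} = p ^ card K"
proof (cases "K = {}")
  case False
  have "prob {\<omega> \<in> space M. \<forall>k\<in>K. \<sigma> k \<omega> = q} = prob (\<Inter>k\<in>K. \<sigma> k -` {q} \<inter> space M)"
    using False by (auto intro!: arg_cong[where f = prob])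
  also have "\<dots> = (\<Prod>k\<in>K. prob (\<sigma> k -` {q} \<inter> space M))"
    by (rule indep_varsD[OF ind]) (use K False in auto)
  also have "\<dots> = p ^ card K"
    using p by (simp add: vimage_def Int_def conj_commute)
  finally show ?thesis .
qed (simp add: prob_space)

lemma prob_no_run_le:
  fixes \<sigma> :: "nat \<Rightarrow> 'a \<Rightarrow> 'b"
  assumes meas[measurable]: "\<And>k. \<sigma> k \<in> measurable M (count_space UNIV)"
    and ind: "indep_vars (\<lambda>_. count_space UNIV) \<sigma> UNIV"
    and p: "\<And>k. prob {\<omega> \<in> space M. \<sigma> k \<omega> = q} = p"
  shows "prob {\<omega> \<in> space M. \<forall>k\<ge>N. \<exists>l<b. \<sigma> (k + l) \<omega> \<noteq> q} \<le> (1 - p ^ b) ^ J"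
proof -
  define run where "run j = {\<omega> \<in> space M. \<forall>l<b. \<sigma> (N + j * b + l) \<omega> = q}" for j
  have run_ev[measurable]: "run j \<in> events" for j unfolding run_def by measurable
  have inj: "inj_on (\<lambda>(j, l). N + j * b + l) (I \<times> {..<b})" for I
  proof (rule inj_onI, clarify)
    fix j l j' l' assume l: "l < b" "l' < b" and eq: "N + j * b + l = N + j' * b + l'"
    then have "(j * b + l) div b = (j' * b + l') div b" "(j * b + l) mod b = (j' * b + l') mod b"
      by simp_all
    then show "j = j' \<and> l = l'" using l by simp
  qed
  have prob_runs: "prob (\<Inter>j\<in>I. run j) = (p ^ b) ^ card I" if I: "finite I" "I \<noteq> {}" for I
  proof -
    let ?K = "(\<lambda>(j, l). N + j * b + l) ` (I \<times> {..<b})"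
    have "(\<Inter>j\<in>I. run j) = {\<omega> \<in> space M. \<forall>k\<in>?K. \<sigma> k \<omega> = q}"
      using I unfolding run_def by auto
    also have "prob \<dots> = p ^ card ?K" by (rule prob_all_eq_pow_card[OF ind p]) (use I in auto)
    also have "card ?K = card I * b" using card_image[OF inj] by (simp add: card_cartesian_product)
    finally show ?thesis by (simp add: power_mult mult.commute)
  qed
  have "indep_events run UNIV"
    using prob_runs[of "{j}" for j] prob_runs by (intro indep_eventsI) auto
  then have indep: "indep_sets (\<lambda>j. sigma_sets (space M) {run j}) UNIV"
    unfolding indep_events_def_alt by (rule indep_sets_sigma) (auto simp: Int_stable_def)
  show ?thesis
  proof (cases "J = 0")
    case False
    have "{\<omega> \<in> space M. \<forall>k\<ge>N. \<exists>l<b. \<sigma> (k + l) \<omega> \<noteq> q} \<subseteq> (\<Inter>j\<in>{..<J}. space M - run j)"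
    proof (intro subsetI INT_I DiffI)
      fix \<omega> j assume \<omega>: "\<omega> \<in> {\<omega> \<in> space M. \<forall>k\<ge>N. \<exists>l<b. \<sigma> (k + l) \<omega> \<noteq> q}"
      then show "\<omega> \<in> space M" by simp
      obtain l where "l < b" "\<sigma> (N + j * b + l) \<omega> \<noteq> q" using \<omega> le_add1 by blast
      then show "\<omega> \<notin> run j" unfolding run_def by auto
    qed
    then have "prob {\<omega> \<in> space M. \<forall>k\<ge>N. \<exists>l<b. \<sigma> (k + l) \<omega> \<noteq> q}
        \<le> prob (\<Inter>j\<in>{..<J}. space M - run j)"
      using False by (intro finite_measure_mono) auto
    also have "\<dots> = (\<Prod>j<J. prob (space M - run j))"
      using False by (intro indep_setsD[OF indep]) (auto intro: sigma_sets.Compl sigma_sets.Basic)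
    also have "\<dots> = (1 - p ^ b) ^ J"
      using prob_runs[of "{j}" for j] by (simp add: prob_compl)
    finally show ?thesis .
  qed simp
qed

lemma AE_frequently_run:
  fixes \<sigma> :: "nat \<Rightarrow> 'a \<Rightarrow> 'b"
  assumes meas[measurable]: "\<And>k. \<sigma> k \<in> measurable M (count_space UNIV)"
    and ind: "indep_vars (\<lambda>_. count_space UNIV) \<sigma> UNIV"
    and p: "\<And>k. prob {\<omega> \<in> space M. \<sigma> k \<omega> = q} = p" and p_pos: "0 < p"
  shows "AE \<omega> in M. \<exists>\<^sub>F k in sequentially. \<forall>l<b. \<sigma> (k + l) \<omega> = q"
proof -
  define no_run where "no_run N = {\<omega> \<in> space M. \<forall>k\<ge>N. \<exists>l<b. \<sigma> (k + l) \<omega> \<noteq> q}" for N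
  have no_run_ev[measurable]: "no_run N \<in> events" for N unfolding no_run_def by measurable
  have "0 < p ^ b" "p ^ b \<le> 1"
    using p_pos p[of 0] prob_le_1 by (auto intro: power_le_one)
  then have "(\<lambda>J. (1 - p ^ b) ^ J) \<longlonglongrightarrow> 0" by (intro LIMSEQ_power_zero) simp
  then have "prob (no_run N) \<le> 0" for N
    using prob_no_run_le[OF meas ind p] unfolding no_run_def by (intro LIMSEQ_le_const) auto
  then have "prob (no_run N) = 0" for N by (meson measure_nonneg order.antisym)
  then have "AE \<omega> in M. \<omega> \<notin> no_run N" for N using prob_eq_0[OF no_run_ev] by blast
  then have "AE \<omega> in M. \<forall>N. \<omega> \<notin> no_run N" by (simp add: AE_all_countable)
  then show ?thesis
    using AE_space by eventually_elim (auto simp: no_run_def frequently_sequentially)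
qed

end


lemma traj_measurable[measurable]:
  assumes meas[measurable]: "\<And>k. \<sigma> k \<in> measurable M (count_space UNIV)"
  shows "(\<lambda>\<omega>. traj n \<Phi> (\<lambda>k. \<sigma> k \<omega>) x0 k i) \<in> borel_measurable M"
proof (induction k arbitrary: i)
  case (Suc k)
  have [measurable]: "(\<lambda>\<omega>. \<Phi> (\<sigma> k \<omega>) i j) \<in> borel_measurable M" for j
    by (rule measurable_compose[OF meas]) simp
  note Suc.IH[measurable]
  show ?case by (simp add: mvec_def)
qed simp

lemma (in prob_space) consensus_almost_surely:
  fixes \<sigma> :: "nat \<Rightarrow> 'a \<Rightarrow> nat"
  assumes meas[measurable]: "\<And>k. \<sigma> k \<in> measurable M (count_space UNIV)"
    and ind: "indep_vars (\<lambda>_. count_space UNIV) \<sigma> UNIV"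
    and n: "1 \<le> n" and stoch: "\<And>q. stochastic n (\<Phi> q)" and prim: "primitive n (\<Phi> q)"
    and p: "\<And>k. prob {\<omega> \<in> space M. \<sigma> k \<omega> = q} = p" and p_pos: "0 < p"
  shows "prob {\<omega> \<in> space M. (\<lambda>k. spread n (traj n \<Phi> (\<lambda>k. \<sigma> k \<omega>) x0 k)) \<longlonglongrightarrow> 0} = 1"
proof -
  have [measurable]: "(\<lambda>\<omega>. spread n (traj n \<Phi> (\<lambda>k. \<sigma> k \<omega>) x0 k)) \<in> borel_measurable M" for k
    unfolding spread_def by measurable
  have "AE \<omega> in M. \<forall>b. \<exists>\<^sub>F k in sequentially. \<forall>l<b. \<sigma> (k + l) \<omega> = q"
    unfolding AE_all_countable using AE_frequently_run[OF meas ind p p_pos] by blast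
  then have "AE \<omega> in M. (\<lambda>k. spread n (traj n \<Phi> (\<lambda>k. \<sigma> k \<omega>) x0 k)) \<longlonglongrightarrow> 0"
  proof eventually_elim
    case (elim \<omega>)
    show ?case by (rule spread_traj_tendsto_zero[where \<Phi> = \<Phi>, OF n stoch prim]) (use elim in simp)
  qed
  moreover have "{\<omega> \<in> space M. (\<lambda>k. spread n (traj n \<Phi> (\<lambda>k. \<sigma> k \<omega>) x0 k)) \<longlonglongrightarrow> 0} \<in> events"
    by measurable
  ultimately show ?thesis by (simp add: prob_Collect_eq_1)
qed


section \<open>The matrix exponential\<close>

lemma mpow_abs_le:
  assumes a: "0 \<le> a" and Qa: "\<And>i j. i \<in> {1..n} \<Longrightarrow> j \<in> {1..n} \<Longrightarrow> \<bar>Q i j\<bar> \<le> a"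
    and i: "i \<in> {1..n}"
  shows "\<bar>mpow n Q k i j\<bar> \<le> (real n * a) ^ k"
  using i
proof (induction k arbitrary: i)
  case 0 then show ?case by (simp add: idm_def)
next
  case (Suc k)
  have "\<bar>mpow n Q (Suc k) i j\<bar> \<le> (\<Sum>l=1..n. \<bar>Q i l\<bar> * \<bar>mpow n Q k l j\<bar>)"
    by (simp add: mmult_def sum_abs flip: abs_mult)
  also have "\<dots> \<le> (\<Sum>l=1..n. a * (real n * a) ^ k)"
    using Qa[OF Suc.prems] Suc.IH a by (intro sum_mono mult_mono) auto
  finally show ?case by simp
qed

lemma summable_mexp_series: "summable (\<lambda>k. norm (mpow n Q k i j / fact k))" if "i \<in> {1..n}"
proof -
  obtain a where a: "0 \<le> a" "\<And>i j. i \<in> {1..n} \<Longrightarrow> j \<in> {1..n} \<Longrightarrow> \<bar>Q i j\<bar> \<le> a"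
    using bounded_entries by metis
  show ?thesis
  proof (rule summable_comparison_test'[OF summable_exp[of "real n * a"]])
    fix k :: nat
    have "\<bar>mpow n Q k i j\<bar> / fact k \<le> (real n * a) ^ k / fact k"
      using mpow_abs_le[OF a that] by (intro divide_right_mono) auto
    then show "norm (norm (mpow n Q k i j / fact k)) \<le> inverse (fact k) * (real n * a) ^ k"
      by (simp add: field_simps)
  qed
qed

lemma pascal_sum_step:
  fixes x :: real and g :: "nat \<Rightarrow> real"
  shows "(\<Sum>m\<le>k. of_nat (k choose m) * x ^ (k - m) * g (Suc m))
           + x * (\<Sum>m\<le>k. of_nat (k choose m) * x ^ (k - m) * g m)
         = (\<Sum>m\<le>Suc k. of_nat (Suc k choose m) * x ^ (Suc k - m) * g m)"
proof -
  have shifted: "(\<Sum>m\<le>k. of_nat (k choose m) * x ^ (k - m) * g (Suc m))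
      = (\<Sum>m\<le>Suc k. (if m = 0 then 0 else of_nat (k choose (m - 1))) * x ^ (Suc k - m) * g m)"
    by (subst sum.atMost_Suc_shift) simp
  have "x * (\<Sum>m\<le>k. of_nat (k choose m) * x ^ (k - m) * g m)
      = (\<Sum>m\<le>k. of_nat (k choose m) * x ^ (Suc k - m) * g m)"
    unfolding sum_distrib_left by (rule sum.cong) (simp_all add: Suc_diff_le)
  also have "\<dots> = (\<Sum>m\<le>Suc k. of_nat (k choose m) * x ^ (Suc k - m) * g m)"
    by simp
  finally have scaled: "x * (\<Sum>m\<le>k. of_nat (k choose m) * x ^ (k - m) * g m)
      = (\<Sum>m\<le>Suc k. of_nat (k choose m) * x ^ (Suc k - m) * g m)" .
  show ?thesis
    unfolding shifted scaled sum.distrib[symmetric]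
  proof (rule sum.cong[OF refl])
    fix m
    show "(if m = 0 then 0 else of_nat (k choose (m - 1))) * x ^ (Suc k - m) * g m
        + of_nat (k choose m) * x ^ (Suc k - m) * g m
        = of_nat (Suc k choose m) * x ^ (Suc k - m) * g m"
      by (cases m) (simp_all add: algebra_simps)
  qed
qed

lemma mpow_diff_scaled_idm:
  assumes "i \<in> {1..n}"
  shows "mpow n (\<lambda>i j. Q i j - c * idm i j) k i j
       = (\<Sum>m\<le>k. of_nat (k choose m) * (-c) ^ (k - m) * mpow n Q m i j)"
  using assms
proof (induction k arbitrary: i)
  case 0 then show ?case by simp
next
  case (Suc k)
  let ?Qc = "\<lambda>i j. Q i j - c * idm i j"
  let ?t = "\<lambda>m. of_nat (k choose m) * (-c) ^ (k - m)"
  have "(\<Sum>l=1..n. Q i l * mpow n ?Qc k l j) = (\<Sum>l=1..n. Q i l * (\<Sum>m\<le>k. ?t m * mpow n Q m l j))"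
    using Suc.IH by (intro sum.cong) auto
  also have "\<dots> = (\<Sum>m\<le>k. ?t m * mpow n Q (Suc m) i j)"
    by (simp add: mmult_def sum_distrib_left mult.left_commute) (rule sum.swap)
  finally have "mpow n ?Qc (Suc k) i j
      = (\<Sum>m\<le>k. ?t m * mpow n Q (Suc m) i j) - c * (\<Sum>l=1..n. idm i l * mpow n ?Qc k l j)"
    by (simp add: mmult_def left_diff_distrib sum_subtractf sum_distrib_left mult.assoc)
  also have "\<dots> = (\<Sum>m\<le>k. ?t m * mpow n Q (Suc m) i j) + (-c) * (\<Sum>m\<le>k. ?t m * mpow n Q m i j)"
    using sum_idm_mult_left[OF Suc.prems] Suc.IH[OF Suc.prems] by simp
  also have "\<dots> = (\<Sum>m\<le>Suc k. of_nat (Suc k choose m) * (-c) ^ (Suc k - m) * mpow n Q m i j)"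
    by (rule pascal_sum_step)
  finally show ?case .
qed

lemma mexp_diff_scaled_idm:
  assumes i: "i \<in> {1..n}"
  shows "mexp n (\<lambda>i j. Q i j - c * idm i j) i j = exp (-c) * mexp n Q i j"
proof -
  define f where "f m = mpow n Q m i j / fact m" for m
  define g where "g m = (-c) ^ m / fact m" for m :: nat
  have f: "summable (\<lambda>m. norm (f m))" unfolding f_def by (rule summable_mexp_series[OF i])
  have g: "summable (\<lambda>m. norm (g m))"
    using summable_exp[of "\<bar>c\<bar>"] by (simp add: g_def abs_mult power_abs field_simps)
  have exp: "(\<Sum>m. g m) = exp (-c)"
    using exp_converges[of "-c"] by (simp add: g_def sums_iff divide_inverse mult.commute)
  have "mexp n (\<lambda>i j. Q i j - c * idm i j) i j = (\<Sum>k. \<Sum>m\<le>k. f m * g (k - m))"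
    unfolding mexp_def
  proof (rule suminf_cong)
    fix k
    have "mpow n (\<lambda>i j. Q i j - c * idm i j) k i j / fact k
        = (\<Sum>m\<le>k. of_nat (k choose m) * (-c) ^ (k - m) * mpow n Q m i j / fact k)"
      by (simp add: mpow_diff_scaled_idm[OF i] sum_divide_distrib)
    also have "\<dots> = (\<Sum>m\<le>k. f m * g (k - m))"
      by (rule sum.cong) (simp_all add: f_def g_def binomial_fact field_simps)
    finally show "mpow n (\<lambda>i j. Q i j - c * idm i j) k i j / fact k = (\<Sum>m\<le>k. f m * g (k - m))" .
  qed
  also have "\<dots> = (\<Sum>m. f m) * (\<Sum>m. g m)" by (rule Cauchy_product[OF f g, symmetric])
  finally show ?thesis unfolding exp by (simp add: mexp_def f_def mult.commute)
qed

lemma mexp_rowsum: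
  assumes "\<And>i. i \<in> {1..n} \<Longrightarrow> (\<Sum>j=1..n. P i j) = 0" and i: "i \<in> {1..n}"
  shows "(\<Sum>j=1..n. mexp n P i j) = 1"
proof -
  have "(\<Sum>j=1..n. mexp n P i j) = (\<Sum>k. (\<Sum>j=1..n. mpow n P k i j) / fact k)"
    unfolding mexp_def sum_divide_distrib
    by (rule suminf_sum[symmetric]) (rule summable_norm_cancel[OF summable_mexp_series[OF i]])
  also have "\<dots> = (\<Sum>k. if k = 0 then 1 else 0)"
    using mpow_rowsum_const[OF assms] by (intro suminf_cong) simp
  finally show ?thesis using sums_single[of 0 "\<lambda>_. 1 :: real"] by (simp add: sums_iff)
qed

lemma mexp_ge_self:
  assumes nonneg: "\<And>i j. i \<in> {1..n} \<Longrightarrow> j \<in> {1..n} \<Longrightarrow> 0 \<le> Q i j"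
    and i: "i \<in> {1..n}" and j: "j \<in> {1..n}"
  shows "Q i j \<le> mexp n Q i j"
proof -
  have terms_nonneg: "0 \<le> mpow n Q k i j / fact k" for k
    using mpow_nonneg[OF nonneg i] by simp
  have "Q i j \<le> (\<Sum>k<2. mpow n Q k i j / fact k)"
    using mpow_1[OF j, of Q i] terms_nonneg[of 0] by (simp add: numeral_2_eq_2)
  also have "\<dots> \<le> mexp n Q i j"
    unfolding mexp_def using terms_nonneg
    by (intro sum_le_suminf summable_norm_cancel[OF summable_mexp_series[OF i]]) auto
  finally show ?thesis .
qed

lemma mexp_ge_shifted:
  assumes off: "\<And>i j. i \<in> {1..n} \<Longrightarrow> j \<in> {1..n} \<Longrightarrow> i \<noteq> j \<Longrightarrow> 0 \<le> P i j"
    and diag: "\<And>i. i \<in> {1..n} \<Longrightarrow> - P i i \<le> c"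
    and i: "i \<in> {1..n}" and j: "j \<in> {1..n}"
  shows "exp (-c) * (P i j + c * idm i j) \<le> mexp n P i j"
proof -
  define Q where "Q i j = P i j + c * idm i j" for i j
  have "0 \<le> Q i j" if "i \<in> {1..n}" "j \<in> {1..n}" for i j
    using off[OF that] diag[OF that(1)] by (cases "i = j") (auto simp: Q_def idm_def)
  then have "exp (-c) * Q i j \<le> exp (-c) * mexp n Q i j"
    using mexp_ge_self i j by simp
  also have "exp (-c) * mexp n Q i j = mexp n (\<lambda>i j. Q i j - c * idm i j) i j"
    by (rule mexp_diff_scaled_idm[OF i, symmetric])
  finally show ?thesis by (simp add: Q_def)
qed

context
  fixes n :: nat and P :: "nat \<Rightarrow> nat \<Rightarrow> real"
  assumes off: "\<And>i j. i \<in> {1..n} \<Longrightarrow> j \<in> {1..n} \<Longrightarrow> i \<noteq> j \<Longrightarrow> 0 \<le> P i j"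
begin

lemma mexp_nonneg_pos:
  assumes "i \<in> {1..n}" "j \<in> {1..n}"
  shows "0 \<le> mexp n P i j" and "i = j \<or> 0 < P i j \<Longrightarrow> 0 < mexp n P i j"
proof -
  define c where "c = 1 + (\<Sum>l=1..n. \<bar>P l l\<bar>)"
  have diag: "- P i i < c" if "i \<in> {1..n}" for i
    using member_le_sum[of i "{1..n}" "\<lambda>l. \<bar>P l l\<bar>"] that by (auto simp: c_def)
  have lower: "exp (-c) * (P i j + c * idm i j) \<le> mexp n P i j"
    using diag by (intro mexp_ge_shifted[OF off _ assms] less_imp_le)
  have "0 \<le> P i j + c * idm i j"
    using off[OF assms] diag[OF assms(1)] by (cases "i = j") (auto simp: idm_def)
  then show "0 \<le> mexp n P i j"
    using lower mult_nonneg_nonneg[OF exp_ge_zero] by (meson order.trans)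
  assume "i = j \<or> 0 < P i j"
  then have "0 < P i j + c * idm i j"
    using off[OF assms] diag[OF assms(1)] by (auto simp: idm_def)
  then show "0 < mexp n P i j"
    using lower mult_pos_pos[OF exp_gt_zero] by (meson order.strict_trans2)
qed

lemma stochastic_mexp:
  assumes "\<And>i. i \<in> {1..n} \<Longrightarrow> (\<Sum>j=1..n. P i j) = 0"
  shows "stochastic n (mexp n P)"
  using mexp_nonneg_pos(1) mexp_rowsum[OF assms] by (simp add: stochastic_def)

end


lemma laplacian_rowsum: "i \<in> {1..n} \<Longrightarrow> (\<Sum>j=1..n. laplacian n B i j) = 0"
  by (simp add: laplacian_def sum_subtractf sum.delta)

lemma laplacian_off_diag: "i \<noteq> j \<Longrightarrow> laplacian n B i j = - B i j"
  by (simp add: laplacian_def)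

lemma laplacian_diag: "laplacian n B i i = (\<Sum>l=1..n. B i l) - B i i"
  by (simp add: laplacian_def)

context
  fixes n :: nat and B :: "nat \<Rightarrow> nat \<Rightarrow> real"
  assumes B_nonneg: "\<And>i j. i \<in> {1..n} \<Longrightarrow> j \<in> {1..n} \<Longrightarrow> 0 \<le> B i j"
begin

lemma stochastic_euler_step:
  assumes "0 \<le> h" and "\<And>i. i \<in> {1..n} \<Longrightarrow> h * (\<Sum>l=1..n. B i l) \<le> 1"
  shows "stochastic n (\<lambda>i j. idm i j - h * laplacian n B i j)"
proof -
  have "0 \<le> idm i j - h * laplacian n B i j" if "i \<in> {1..n}" "j \<in> {1..n}" for i j
  proof (cases "i = j")
    case True
    then show ?thesis
      using assms(2)[OF that(1)] mult_nonneg_nonneg[OF assms(1) B_nonneg[OF that]]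
      by (simp add: idm_def laplacian_diag right_diff_distrib)
  qed (use B_nonneg[OF that] assms(1) in \<open>simp add: idm_def laplacian_off_diag\<close>)
  moreover have "(\<Sum>j=1..n. idm i j - h * laplacian n B i j) = 1" if "i \<in> {1..n}" for i
    using that laplacian_rowsum[OF that, of B]
    by (simp add: sum_subtractf idm_def flip: sum_distrib_left)
  ultimately show ?thesis by (simp add: stochastic_def)
qed

lemma euler_step_pos:
  assumes "0 < h" and "\<And>i. i \<in> {1..n} \<Longrightarrow> h * (\<Sum>l=1..n. B i l) < 1"
    and "i \<in> {1..n}" "j \<in> {1..n}" "i = j \<or> 0 < B i j"
  shows "0 < idm i j - h * laplacian n B i j"
proof (cases "i = j")
  case True
  then show ?thesis
    using assms(2)[OF assms(3)] mult_nonneg_nonneg[OF less_imp_le[OF assms(1)] B_nonneg[OF assms(3,3)]]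
    by (simp add: idm_def laplacian_diag right_diff_distrib)
qed (use assms in \<open>simp add: idm_def laplacian_off_diag\<close>)

lemma stochastic_euler_trans:
  assumes "0 \<le> h" and "\<And>i. i \<in> {1..n} \<Longrightarrow> h * (\<Sum>l=1..n. B i l) \<le> 1"
  shows "stochastic n (euler_trans n h kbar (laplacian n B))"
  unfolding euler_trans_def by (rule stochastic_mpow[OF stochastic_euler_step[OF assms]])

lemma euler_trans_pos:
  assumes "0 < h" and "\<And>i. i \<in> {1..n} \<Longrightarrow> h * (\<Sum>l=1..n. B i l) < 1" and "0 < kbar"
    and "i \<in> {1..n}" "j \<in> {1..n}" "i = j \<or> 0 < B i j"
  shows "0 < euler_trans n h kbar (laplacian n B) i j"
proof -
  define W where "W = (\<lambda>i j. idm i j - h * laplacian n B i j)"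
  have "stochastic n W"
    unfolding W_def using assms(1,2) by (intro stochastic_euler_step) (auto simp: less_imp_le)
  then have W_nonneg: "\<And>i j. i \<in> {1..n} \<Longrightarrow> j \<in> {1..n} \<Longrightarrow> 0 \<le> W i j"
    by (simp add: stochastic_def)
  have W_pos: "\<And>i j. i \<in> {1..n} \<Longrightarrow> j \<in> {1..n} \<Longrightarrow> i = j \<or> 0 < B i j \<Longrightarrow> 0 < W i j"
    unfolding W_def using euler_step_pos[OF assms(1,2)] by blast
  have W_diag: "\<And>i. i \<in> {1..n} \<Longrightarrow> 0 < W i i" using W_pos by blast
  have "0 < mpow n W kbar i j"
  proof (cases "i = j")
    case True
    then show ?thesis using mpow_diag_pos[where P = W, OF W_nonneg W_diag assms(4)] by blast
  next
    case False
    then show ?thesis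
      using W_nonneg W_diag W_pos assms(3-6) by (intro mpow_pos[where P = W]) auto
  qed
  then show ?thesis by (simp add: euler_trans_def W_def)
qed

lemma stochastic_exp_trans:
  assumes "0 \<le> \<Delta>" shows "stochastic n (exp_trans n \<Delta> (laplacian n B))"
  unfolding exp_trans_def
proof (rule stochastic_mexp)
  show "0 \<le> - (\<Delta> * laplacian n B i j)" if "i \<in> {1..n}" "j \<in> {1..n}" "i \<noteq> j" for i j
    using that assms B_nonneg[OF that(1,2)] by (simp add: laplacian_off_diag)
  show "(\<Sum>j=1..n. - (\<Delta> * laplacian n B i j)) = 0" if "i \<in> {1..n}" for i
    using laplacian_rowsum[OF that] by (simp add: sum_negf flip: sum_distrib_left)
qed

lemma exp_trans_pos:
  assumes "0 < \<Delta>" and "i \<in> {1..n}" "j \<in> {1..n}" "i = j \<or> 0 < B i j"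
  shows "0 < exp_trans n \<Delta> (laplacian n B) i j"
  unfolding exp_trans_def
proof (rule mexp_nonneg_pos(2))
  show "0 \<le> - (\<Delta> * laplacian n B i j)" if "i \<in> {1..n}" "j \<in> {1..n}" "i \<noteq> j" for i j
    using that assms(1) B_nonneg[OF that(1,2)] by (simp add: laplacian_off_diag)
  show "i = j \<or> 0 < - (\<Delta> * laplacian n B i j)"
    using assms by (cases "i = j") (auto simp: laplacian_off_diag)
qed (use assms in auto)

end


lemma sym01_adj_entry:
  "sym01_adj n A \<Longrightarrow> i \<in> {1..n} \<Longrightarrow> j \<in> {1..n} \<Longrightarrow> A i j = 0 \<or> A i j = 1"
  unfolding sym01_adj_def by blast

lemma fail_adj_nonneg:
  "sym01_adj n A \<Longrightarrow> i \<in> {1..n} \<Longrightarrow> j \<in> {1..n} \<Longrightarrow> 0 \<le> fail_adj s A q i j"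
  using sym01_adj_entry[of n A i j] by (auto simp: fail_adj_def)

lemma fail_adj_rowsum_le_dmax:
  assumes A: "sym01_adj n A" and i: "i \<in> {1..n}"
  shows "(\<Sum>l=1..n. fail_adj s A q i l) \<le> dmax n A"
proof -
  have "(\<Sum>l=1..n. fail_adj s A q i l) \<le> (\<Sum>l=1..n. A i l)"
  proof (rule sum_mono)
    fix l assume "l \<in> {1..n}"
    then have "A i l = 0 \<or> A i l = 1" by (rule sym01_adj_entry[OF A i])
    then show "fail_adj s A q i l \<le> A i l" by (auto simp: fail_adj_def)
  qed
  also have "\<dots> \<le> dmax n A"
    unfolding dmax_def using i by (intro Max_ge) auto
  finally show ?thesis .
qed

lemma fail_adj_4: "fail_adj s A 4 = A"
  by (auto simp: fail_adj_def failed_def split: scenario.splits intro!: ext)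

lemma euler_trans_fail_adj:
  assumes A: "sym01_adj n A" and conn: "connected_graph n A"
    and h: "0 < h" "h * dmax n A < 1" and kbar: "0 < kbar"
  shows "stochastic n (euler_trans n h kbar (laplacian n (fail_adj s A q)))"
    and "primitive n (euler_trans n h kbar (laplacian n (fail_adj s A 4)))"
proof -
  have deg: "h * (\<Sum>l=1..n. fail_adj s A q i l) < 1" if "i \<in> {1..n}" for q i
  proof -
    have "h * (\<Sum>l=1..n. fail_adj s A q i l) \<le> h * dmax n A"
      using fail_adj_rowsum_le_dmax[OF A that] h(1) by (simp add: mult_left_mono)
    then show ?thesis using h(2) by linarith
  qed
  have stoch: "stochastic n (euler_trans n h kbar (laplacian n (fail_adj s A q)))" for q
    by (rule stochastic_euler_trans[where B = "fail_adj s A q"]) (use fail_adj_nonneg[OF A] deg h(1) in \<open>auto intro: less_imp_le\<close>)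
  then show "stochastic n (euler_trans n h kbar (laplacian n (fail_adj s A q)))" .
  show "primitive n (euler_trans n h kbar (laplacian n (fail_adj s A 4)))"
  proof (rule primitive_if_connected_support[OF stoch conn])
    fix i j assume ij: "i \<in> {1..n}" "j \<in> {1..n}" and "i = j \<or> A i j = 1"
    then have "i = j \<or> 0 < fail_adj s A 4 i j" by (auto simp: fail_adj_4)
    then show "0 < euler_trans n h kbar (laplacian n (fail_adj s A 4)) i j"
      using euler_trans_pos[where B = "fail_adj s A 4", OF fail_adj_nonneg[OF A] h(1) deg kbar ij] by blast
  qed
qed

lemma exp_trans_fail_adj:
  assumes A: "sym01_adj n A" and conn: "connected_graph n A" and \<Delta>: "0 < \<Delta>"
  shows "stochastic n (exp_trans n \<Delta> (laplacian n (fail_adj s A q)))"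
    and "primitive n (exp_trans n \<Delta> (laplacian n (fail_adj s A 4)))"
proof -
  have stoch: "stochastic n (exp_trans n \<Delta> (laplacian n (fail_adj s A q)))" for q
    by (rule stochastic_exp_trans[where B = "fail_adj s A q"]) (use fail_adj_nonneg[OF A] \<Delta> in auto)
  then show "stochastic n (exp_trans n \<Delta> (laplacian n (fail_adj s A q)))" .
  show "primitive n (exp_trans n \<Delta> (laplacian n (fail_adj s A 4)))"
  proof (rule primitive_if_connected_support[OF stoch conn])
    fix i j assume ij: "i \<in> {1..n}" "j \<in> {1..n}" and "i = j \<or> A i j = 1"
    then have "i = j \<or> 0 < fail_adj s A 4 i j" by (auto simp: fail_adj_4)
    then show "0 < exp_trans n \<Delta> (laplacian n (fail_adj s A 4)) i j"
      using exp_trans_pos[where B = "fail_adj s A 4", OF fail_adj_nonneg[OF A] \<Delta> ij] by blast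
  qed
qed


theorem theorem3:
  fixes n :: nat and A :: "nat \<Rightarrow> nat \<Rightarrow> real" and s :: scenario
    and \<alpha> \<beta> \<gamma> \<theta> h :: real and kbar :: nat
    and M :: "'a measure" and \<sigma> :: "nat \<Rightarrow> 'a \<Rightarrow> nat" and x0 :: "nat \<Rightarrow> real"
  assumes "n \<ge> 3"
    and "sym01_adj n A"
    and "connected_graph n A"
    and "0 < \<alpha>" "\<alpha> < 1" "0 < \<beta>" "\<beta> < 1" "0 < \<gamma>" "\<gamma> < 1" "0 < \<theta>" "\<theta> < 1"
    and "\<alpha> + \<beta> + \<gamma> + \<theta> = 1"
    and "kbar \<ge> 1"
    and "0 < h" and "h < 1 / dmax n A"
    and "strongly_connected n (expected_graph s A (probs \<alpha> \<beta> \<gamma> \<theta>))"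
    and "prob_space M"
    and "\<And>k. \<sigma> k \<in> measurable M (count_space UNIV)"
    and "prob_space.indep_vars M (\<lambda>_. count_space UNIV) \<sigma> UNIV"
    and "\<And>k \<omega>. \<omega> \<in> space M \<Longrightarrow> \<sigma> k \<omega> \<in> {1..4}"
    and "\<And>k q. q \<in> {1..4} \<Longrightarrow> measure M {\<omega> \<in> space M. \<sigma> k \<omega> = q} = probs \<alpha> \<beta> \<gamma> \<theta> q"
  shows "measure M {\<omega> \<in> space M.
            (\<lambda>k. spread n (traj n (\<lambda>q. euler_trans n h kbar (laplacian n (fail_adj s A q)))
                                 (\<lambda>k. \<sigma> k \<omega>) x0 k)) \<longlonglongrightarrow> 0} = 1
       \<and> measure M {\<omega> \<in> space M.
            (\<lambda>k. spread n (traj n (\<lambda>q. exp_trans n (real kbar * h) (laplacian n (fail_adj s A q)))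
                                 (\<lambda>k. \<sigma> k \<omega>) x0 k)) \<longlonglongrightarrow> 0} = 1"
proof -
  interpret prob_space M by (rule assms(17))
  have n: "1 \<le> n" using assms(1) by simp
  have "0 < 1 / dmax n A" using assms(14,15) by linarith
  then have "0 < dmax n A" by (simp add: zero_less_divide_1_iff)
  then have "h * dmax n A < 1" using assms(15) by (simp add: less_divide_eq)
  moreover have "0 < kbar" "0 < real kbar * h" using assms(13,14) by simp_all
  ultimately have euler: "stochastic n (euler_trans n h kbar (laplacian n (fail_adj s A q)))"
      "primitive n (euler_trans n h kbar (laplacian n (fail_adj s A 4)))"
    and exp: "stochastic n (exp_trans n (real kbar * h) (laplacian n (fail_adj s A q)))"
      "primitive n (exp_trans n (real kbar * h) (laplacian n (fail_adj s A 4)))" for q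
    using euler_trans_fail_adj[OF assms(2,3,14)] exp_trans_fail_adj[OF assms(2,3)] by blast+
  have mode4: "\<And>k. prob {\<omega> \<in> space M. \<sigma> k \<omega> = 4} = \<theta>"
    using assms(21) by (simp add: probs_def)
  show ?thesis
    using consensus_almost_surely[where \<Phi> = "\<lambda>q. euler_trans n h kbar (laplacian n (fail_adj s A q))",
        OF assms(18,19) n euler mode4 assms(10)]
      consensus_almost_surely[where \<Phi> = "\<lambda>q. exp_trans n (real kbar * h) (laplacian n (fail_adj s A q))",
        OF assms(18,19) n exp mode4 assms(10)]
    by simp
qed

end
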